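(* Let $\mathcal{I}=\{(i\mid A_i): i\in[m]\}$ be an index coding instance and let $|A|_{\min}=\min_{i\in[m]}|A_i|$. Then for every execution of the UMCD algorithm on $\mathcal{I}$ (with arbitrary tie-breaking), its output satisfies $$\beta_{\text{UMCD}}(\mathcal{I})\le \beta_{\text{MDS}}(\mathcal{I}) = m-|A|_{\min}.$$
   Context: An index coding instance consists of a positive integer $m$ and, for each receiver $i\in[m]=\{1,\dots,m\}$ (who wants message $x_i$), a side-information set $A_i\subseteq[m]\setminus\{i\}$. Write $B_i=[m]\setminus(A_i\cup\{i\})$ (interfering set). For a $0/1$ matrix $\boldsymbol{G}$ with rows indexed by $[r]$ and columns by $[m]$, $\boldsymbol{G}_{[k]}^{L}$ denotes the submatrix formed by the first $k$ rows and the columns indexed by $L\subseteq[m]$, and $\mathrm{mcm}(\boldsymbol{G})$ denotes the maximum number of entries equal to $1$ of $\boldsymbol{G}$ no two of which lie in the same row or the same column (the size of a maximum matching in the bipartite graph between rows and columns with an edge wherever the entry is $1$); a matrix with no columns has $\mathrm{mcm}=0$. UMCD algorithm: start with $N=[m]$, $k=0$. While $N\neq\emptyset$: set $k\leftarrow k+1$; choose $w\in N$ with $|A_w|=\min_{i\in N}|A_i|$ (ties broken arbitrarily); let the $k$-th row of $\boldsymbol{G}$ be the indicator vector of $\{w\}\cup A_w$ (entry $1$ in the columns of $\{w\}\cup A_w$, $0$ elsewhere); remove $w$ from $N$; then remove from $N$ every $i\in N$ with $\mathrm{mcm}(\boldsymbol{G}_{[k]}^{\{i\}\cup B_i})=\mathrm{mcm}(\boldsymbol{G}_{[k]}^{B_i})+1$.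 When $N=\emptyset$ the algorithm outputs $\beta_{\text{UMCD}}(\mathcal{I})=k$. *)

theory Defs
  imports Main
begin

text \<open>A 0/1 matrix with columns indexed by naturals is represented as a list of rows;
  each row is the set of columns where the entry equals 1.
  The k-th row of the paper is the (k-1)-th list element.\<close>

definition is_matching :: "nat set list \<Rightarrow> nat set \<Rightarrow> (nat \<times> nat) set \<Rightarrow> bool" where
  "is_matching G L M \<longleftrightarrow>
     M \<subseteq> {..<length G} \<times> L \<and> (\<forall>(r, c) \<in> M. c \<in> G ! r) \<and> inj_on fst M \<and> inj_on snd M"

text \<open>mcm of the submatrix of G consisting of all rows of G and the columns L
  (L is assumed finite; a matrix with no columns has mcm = 0).\<close>
definition mcm :: "nat set list \<Rightarrow> nat set \<Rightarrow> nat" where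
  "mcm G L = Max {card M | M. is_matching G L M}"

definition interf :: "nat \<Rightarrow> (nat \<Rightarrow> nat set) \<Rightarrow> nat \<Rightarrow> nat set" where
  "interf m A i = {1..m} - (A i \<union> {i})"

text \<open>Executions of the UMCD algorithm (arbitrary tie-breaking).
  umcd_exec m A N G k: starting from the current set N and current matrix G
  (whose rows are the first length G rows built so far), some run of the
  remaining while loop terminates with output k.\<close>
inductive umcd_exec :: "nat \<Rightarrow> (nat \<Rightarrow> nat set) \<Rightarrow> nat set \<Rightarrow> nat set list \<Rightarrow> nat \<Rightarrow> bool"
  for m :: nat and A :: "nat \<Rightarrow> nat set" where
  stop: "umcd_exec m A {} G (length G)"
| step: "\<lbrakk> N \<noteq> {}; w \<in> N; \<forall>i\<in>N. card (A w) \<le> card (A i);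
          G' = G @ [insert w (A w)];
          N' = {i \<in> N - {w}. mcm G' (insert i (interf m A i)) \<noteq> mcm G' (interf m A i) + 1};
          umcd_exec m A N' G' k \<rbrakk>
        \<Longrightarrow> umcd_exec m A N G k"

definition index_coding_instance :: "nat \<Rightarrow> (nat \<Rightarrow> nat set) \<Rightarrow> bool" where
  "index_coding_instance m A \<longleftrightarrow> m \<ge> 1 \<and> (\<forall>i\<in>{1..m}. A i \<subseteq> {1..m} - {i})"

definition umcd_output :: "nat \<Rightarrow> (nat \<Rightarrow> nat set) \<Rightarrow> nat \<Rightarrow> bool" where
  "umcd_output m A k \<longleftrightarrow> umcd_exec m A {1..m} [] k"

definition A_min :: "nat \<Rightarrow> (nat \<Rightarrow> nat set) \<Rightarrow> nat" where
  "A_min m A = Min ((\<lambda>i. card (A i)) ` {1..m})"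

end

theory Submission
  imports Defs
begin

text \<open>Let \<open>a = |A|\<^sub>m\<^sub>i\<^sub>n\<close>. Every row \<open>{w} \<union> A\<^sub>w\<close> added by UMCD has at least \<open>a + 1\<close> ones,
  and the matrix stays \<^emph>\<open>\<open>a\<close>-expanding\<close>: every nonempty set \<open>R\<close> of rows has ones in at
  least \<open>|R| + a\<close> columns. A new row \<open>S\<close> can only destroy this if \<open>S\<close> lies in the column
  support of a tight set \<open>R\<close> of earlier rows (support of size exactly \<open>|R| + a\<close>). But then
  \<open>w\<close> was already decodable: by the Koenig--Ore deficiency formula for \<open>mcm\<close>, a set of rows of
  maximal deficiency with respect to the columns \<open>{w} \<union> B\<^sub>w\<close> must contain \<open>w\<close> in its support,
  since adding the tight rows \<open>R\<close> to a set avoiding \<open>w\<close> strictly increases its deficiency;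
  so column \<open>w\<close> raises \<open>mcm\<close> by one and \<open>w\<close> would have left \<open>N\<close> before being chosen.
  Finally, \<open>k\<close> rows that are \<open>a\<close>-expanding inside \<open>[m]\<close> force \<open>k + a \<le> m\<close>.\<close>

lemma Hall_condition_remove_critical:
  fixes F :: "'a \<Rightarrow> 'b set"
  assumes "finite I" "\<forall>i\<in>I. finite (F i)"
    and Hall: "\<forall>K\<subseteq>I. card K \<le> card (\<Union>(F ` K))"
    and J: "J \<subseteq> I" "card (\<Union>(F ` J)) = card J"
  shows "\<forall>K\<subseteq>I - J. card K \<le> card (\<Union>i\<in>K. F i - \<Union>(F ` J))"
proof (intro allI impI)
  fix K assume K: "K \<subseteq> I - J"
  have fin: "finite (\<Union>(F ` L))" if "L \<subseteq> I" for L
    using that assms(1,2) by (meson finite_UN_I finite_subset subsetD)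
  have "card K + card J = card (K \<union> J)"
    using K J(1) assms(1) by (subst card_Un_disjoint) (auto intro: finite_subset)
  also have "\<dots> \<le> card (\<Union>(F ` (K \<union> J)))"
    using Hall K J(1) by (metis Diff_subset le_sup_iff order_trans)
  also have "\<dots> = card ((\<Union>i\<in>K. F i - \<Union>(F ` J)) \<union> \<Union>(F ` J))"
    by (rule arg_cong[where f = card]) auto
  also have "\<dots> = card (\<Union>i\<in>K. F i - \<Union>(F ` J)) + card (\<Union>(F ` J))"
    using fin[of K] fin[of J] K J(1) by (intro card_Un_disjoint) auto
  finally show "card K \<le> card (\<Union>i\<in>K. F i - \<Union>(F ` J))" using J(2) by simp
qed

lemma Hall_condition_remove_point:
  fixes F :: "'a \<Rightarrow> 'b set"
  assumes surplus: "\<forall>K\<subseteq>I. K \<noteq> {} \<longrightarrow> K \<noteq> I \<longrightarrow> card K < card (\<Union>(F ` K))"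
    and "i \<in> I"
  shows "\<forall>K\<subseteq>I - {i}. card K \<le> card (\<Union>j\<in>K. F j - {x})"
proof (intro allI impI)
  fix K assume K: "K \<subseteq> I - {i}"
  show "card K \<le> card (\<Union>j\<in>K. F j - {x})"
  proof (cases "K = {}")
    case False
    then have "card K < card (\<Union>(F ` K))" using surplus K \<open>i \<in> I\<close> by blast
    moreover have "card (\<Union>(F ` K)) - 1 \<le> card (\<Union>(F ` K) - {x})"
      using diff_card_le_card_Diff[of "{x}" "\<Union>(F ` K)"] by simp
    moreover have "(\<Union>j\<in>K. F j - {x}) = \<Union>(F ` K) - {x}" by auto
    ultimately show ?thesis by simp
  qed simp
qed

theorem Hall_marriage:
  fixes F :: "'a \<Rightarrow> 'b set"
  assumes "finite I" "\<forall>i\<in>I. finite (F i)"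
    and "\<forall>K\<subseteq>I. card K \<le> card (\<Union>(F ` K))"
  shows "\<exists>f. inj_on f I \<and> (\<forall>i\<in>I. f i \<in> F i)"
  using assms
proof (induction "card I" arbitrary: I F rule: less_induct)
  case less
  note fin = less.prems(1) and finF = less.prems(2) and Hall = less.prems(3)
  consider (critical) J where "J \<subseteq> I" "J \<noteq> {}" "J \<noteq> I" "card (\<Union>(F ` J)) = card J"
    | (surplus) "\<forall>K\<subseteq>I. K \<noteq> {} \<longrightarrow> K \<noteq> I \<longrightarrow> card K < card (\<Union>(F ` K))"
    using Hall by (metis le_neq_implies_less)
  then show ?case
  proof cases
    case critical
    have "card J < card I"
      using critical fin by (meson psubsetI psubset_card_mono)
    then have "\<exists>f. inj_on f J \<and> (\<forall>i\<in>J. f i \<in> F i)"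
      by (rule less.hyps) (use critical(1) fin finF Hall in \<open>blast intro: finite_subset\<close>)+
    then obtain f1 where f1: "inj_on f1 J" "\<forall>i\<in>J. f1 i \<in> F i" by blast
    have "card (I - J) < card I"
      using critical fin by (intro psubset_card_mono) auto
    then have "\<exists>f. inj_on f (I - J) \<and> (\<forall>i\<in>I - J. f i \<in> F i - \<Union>(F ` J))"
      by (rule less.hyps)
        (use fin finF Hall_condition_remove_critical[OF fin finF Hall critical(1,4)] in auto)
    then obtain f2 where f2: "inj_on f2 (I - J)" "\<forall>i\<in>I - J. f2 i \<in> F i - \<Union>(F ` J)"
      by blast
    have "inj_on (\<lambda>i. if i \<in> J then f1 i else f2 i) (J \<union> (I - J))"
      using f1 f2 by (intro inj_on_disjoint_Un) auto
    moreover have "\<forall>i\<in>I. (if i \<in> J then f1 i else f2 i) \<in> F i" using f1 f2 by auto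
    ultimately show ?thesis using critical(1) by (auto simp: Un_absorb1)
  next
    case surplus
    show ?thesis
    proof (cases "I = {}")
      case False
      then obtain i where "i \<in> I" by blast
      then have "F i \<noteq> {}" using Hall[rule_format, of "{i}"] by auto
      then obtain x where "x \<in> F i" by blast
      have "card (I - {i}) < card I" using \<open>i \<in> I\<close> fin by (meson card_Diff1_less)
      then have "\<exists>f. inj_on f (I - {i}) \<and> (\<forall>j\<in>I - {i}. f j \<in> F j - {x})"
        by (rule less.hyps)
          (use fin finF Hall_condition_remove_point[OF surplus \<open>i \<in> I\<close>] in auto)
      then obtain f where f: "inj_on f (I - {i})" "\<forall>j\<in>I - {i}. f j \<in> F j - {x}"
        by blast
      have "inj_on (f(i := x)) I"
        using f \<open>i \<in> I\<close> by (auto simp: inj_on_def)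
      moreover have "\<forall>j\<in>I. (f(i := x)) j \<in> F j" using f \<open>x \<in> F i\<close> by auto
      ultimately show ?thesis by blast
    qed simp
  qed
qed

lemma Hall_deficiency:
  fixes F :: "'a \<Rightarrow> 'b set"
  assumes "finite I" "\<forall>i\<in>I. finite (F i)"
    and deficiency: "\<forall>K\<subseteq>I. card K \<le> card (\<Union>(F ` K)) + d"
  shows "\<exists>K f. K \<subseteq> I \<and> card I \<le> card K + d \<and> inj_on f K \<and> (\<forall>i\<in>K. f i \<in> F i)"
proof -
  define F' :: "'a \<Rightarrow> ('b + nat) set" where "F' i = Inl ` F i \<union> Inr ` {..<d}" for i
  have "\<exists>g. inj_on g I \<and> (\<forall>i\<in>I. g i \<in> F' i)"
  proof (rule Hall_marriage)
    show "\<forall>K\<subseteq>I. card K \<le> card (\<Union>(F' ` K))"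
    proof (intro allI impI)
      fix K assume K: "K \<subseteq> I"
      show "card K \<le> card (\<Union>(F' ` K))"
      proof (cases "K = {}")
        case False
        then have "\<Union>(F' ` K) = Inl ` \<Union>(F ` K) \<union> Inr ` {..<d}" by (auto simp: F'_def)
        moreover have "finite (\<Union>(F ` K))"
          using K assms(1,2) by (meson finite_UN_I finite_subset subsetD)
        then have "card (Inl ` \<Union>(F ` K) \<union> Inr ` {..<d}) = card (\<Union>(F ` K)) + d"
          by (subst card_Un_disjoint) (auto simp: card_image)
        ultimately show ?thesis using deficiency K by simp
      qed simp
    qed
  qed (use assms(1,2) in \<open>auto simp: F'_def\<close>)
  then obtain g where g: "inj_on g I" "\<forall>i\<in>I. g i \<in> F' i" by blast
  define K where "K = {i \<in> I. isl (g i)}"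
  have "K \<subseteq> I" by (auto simp: K_def)
  have "g ` (I - K) \<subseteq> Inr ` {..<d}"
    using g(2) by (auto simp: K_def F'_def)
  then have "card (I - K) \<le> card (Inr ` {..<d} :: ('b + nat) set)"
    using g(1) by (intro card_inj_on_le) (auto intro: inj_on_subset)
  then have "card (I - K) \<le> d" by (simp add: card_image)
  moreover have "card I = card K + card (I - K)"
    using \<open>K \<subseteq> I\<close> card_Diff_subset[OF finite_subset[OF _ assms(1)]] card_mono[OF assms(1)]
    by fastforce
  moreover have "inj_on (projl \<circ> g) K"
    using g(1) unfolding K_def inj_on_def
    by (metis (mono_tags) comp_apply isl_def mem_Collect_eq sum.sel(1))
  moreover have "\<forall>i\<in>K. (projl \<circ> g) i \<in> F i"
    using g(2) unfolding K_def F'_def by auto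
  ultimately show ?thesis using \<open>K \<subseteq> I\<close> by (intro exI[of _ K] exI[of _ "projl \<circ> g"]) auto
qed

definition nbhd :: "nat set list \<Rightarrow> nat set \<Rightarrow> nat set" where
  "nbhd G U = (\<Union>r\<in>U. G ! r)"

lemma finite_matching_cards:
  assumes "finite L"
  shows "finite {card M | M. is_matching G L M}"
proof -
  have "card M \<le> card ({..<length G} \<times> L)" if "is_matching G L M" for M
    using that assms by (intro card_mono) (auto simp: is_matching_def)
  then show ?thesis by (auto intro: finite_subset[where B = "{..card ({..<length G} \<times> L)}"])
qed

lemma card_matching_le_mcm: "finite L \<Longrightarrow> is_matching G L M \<Longrightarrow> card M \<le> mcm G L"
  unfolding mcm_def by (auto intro: Max_ge finite_matching_cards)

lemma ex_maximum_matching: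
  assumes "finite L"
  shows "\<exists>M. is_matching G L M \<and> card M = mcm G L"
proof -
  have "is_matching G L {}" by (simp add: is_matching_def)
  then have "mcm G L \<in> {card M | M. is_matching G L M}"
    unfolding mcm_def using finite_matching_cards[OF assms] by (intro Max_in) auto
  then show ?thesis by auto
qed

lemma mcm_Nil: "mcm [] L = 0"
proof -
  have "{card M | M. is_matching [] L M} = {0}"
    unfolding is_matching_def by (auto intro!: exI[of _ "{}"])
  then show ?thesis unfolding mcm_def by simp
qed

lemma mcm_insert_le:
  assumes "finite L"
  shows "mcm G (insert w L) \<le> Suc (mcm G L)"
proof -
  obtain M where M: "is_matching G (insert w L) M" "card M = mcm G (insert w L)"
    using ex_maximum_matching assms by (meson finite_insert)
  define Mw where "Mw = {p \<in> M. snd p = w}"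
  have "is_matching G L (M - Mw)"
    using M(1) unfolding is_matching_def Mw_def by (auto intro: inj_on_subset)
  then have "card (M - Mw) \<le> mcm G L" using card_matching_le_mcm assms by blast
  moreover have "card Mw \<le> card {w}"
    using M(1) unfolding is_matching_def Mw_def
    by (intro card_inj_on_le[where f = snd]) (auto intro: inj_on_subset)
  moreover have "M = (M - Mw) \<union> Mw" by (auto simp: Mw_def)
  then have "card M \<le> card (M - Mw) + card Mw" by (metis card_Un_le)
  ultimately show ?thesis using M(2) by simp
qed

text \<open>This and \<open>ex_deficient_rows\<close> together are the Koenig--Ore formula
  \<open>mcm G L = min\<^sub>U (length G - card U + card (nbhd G U \<inter> L))\<close>.\<close>

lemma mcm_add_card_le:
  assumes "finite L" "U \<subseteq> {..<length G}"
  shows "mcm G L + card U \<le> length G + card (nbhd G U \<inter> L)"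
proof -
  obtain M where M: "is_matching G L M" "card M = mcm G L"
    using ex_maximum_matching[OF assms(1)] by blast
  define MU where "MU = {p \<in> M. fst p \<in> U}"
  have "card MU \<le> card (nbhd G U \<inter> L)"
    using M(1) assms(1) unfolding is_matching_def MU_def nbhd_def
    by (intro card_inj_on_le[where f = snd]) (fastforce intro: inj_on_subset)+
  moreover have "card (M - MU) \<le> card ({..<length G} - U)"
    using M(1) unfolding is_matching_def MU_def
    by (intro card_inj_on_le[where f = fst]) (auto intro: inj_on_subset)
  moreover have "card ({..<length G} - U) + card U = length G"
    using assms(2) card_mono[OF _ assms(2)] by (simp add: card_Diff_subset finite_subset)
  moreover have "M = (M - MU) \<union> MU" by (auto simp: MU_def)
  then have "card M \<le> card (M - MU) + card MU" by (metis card_Un_le)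
  ultimately show ?thesis using M(2) by linarith
qed

lemma is_matching_graph:
  assumes "K \<subseteq> {..<length G}" "inj_on f K" "\<forall>r\<in>K. f r \<in> G ! r \<inter> L"
  shows "is_matching G L ((\<lambda>r. (r, f r)) ` K)"
  using assms unfolding is_matching_def by (auto simp: inj_on_def)

lemma ex_deficient_rows:
  assumes "finite L"
  shows "\<exists>U\<subseteq>{..<length G}. length G + card (nbhd G U \<inter> L) \<le> mcm G L + card U"
proof -
  define rows where "rows = {..<length G}"
  \<comment> \<open>truncated subtraction: if \<open>U0\<close> below has no deficit, then \<open>d = 0\<close> and \<open>U = {}\<close> works\<close>
  define defect where "defect U = card U - card (nbhd G U \<inter> L)" for U
  define d where "d = Max (defect ` Pow rows)"
  have "d \<in> defect ` Pow rows" unfolding d_def rows_def by (intro Max_in) auto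
  then obtain U0 where U0: "U0 \<subseteq> rows" "defect U0 = d" by auto
  have "\<forall>K\<subseteq>rows. card K \<le> card (\<Union>r\<in>K. G ! r \<inter> L) + d"
  proof (intro allI impI)
    fix K assume "K \<subseteq> rows"
    then have "defect K \<le> d" unfolding d_def rows_def by (simp add: Max_ge)
    moreover have "(\<Union>r\<in>K. G ! r \<inter> L) = nbhd G K \<inter> L" by (auto simp: nbhd_def)
    ultimately show "card K \<le> card (\<Union>r\<in>K. G ! r \<inter> L) + d" by (simp add: defect_def)
  qed
  then obtain K f where K: "K \<subseteq> rows" "card rows \<le> card K + d" "inj_on f K"
      "\<forall>r\<in>K. f r \<in> G ! r \<inter> L"
    using Hall_deficiency[of rows "\<lambda>r. G ! r \<inter> L" d] assms by (auto simp: rows_def)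
  have "card K \<le> mcm G L"
    using card_matching_le_mcm[OF assms is_matching_graph[OF _ K(3,4)]] K(1)
    by (simp add: rows_def card_image inj_on_def)
  then have "length G \<le> mcm G L + d" using K(2) by (simp add: rows_def)
  show ?thesis
  proof (cases "card (nbhd G U0 \<inter> L) \<le> card U0")
    case True
    then show ?thesis using U0 \<open>length G \<le> mcm G L + d\<close> by (auto simp: defect_def rows_def)
  next
    case False
    then have "length G \<le> mcm G L" using U0 \<open>length G \<le> mcm G L + d\<close> by (simp add: defect_def)
    then show ?thesis by (intro exI[of _ "{}"]) (simp add: nbhd_def)
  qed
qed

definition expanding :: "nat set list \<Rightarrow> nat \<Rightarrow> bool" where
  "expanding G a \<longleftrightarrow> (\<forall>R\<subseteq>{..<length G}. R \<noteq> {} \<longrightarrow> card R + a \<le> card (nbhd G R))"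

lemma expandingD:
  "expanding G a \<Longrightarrow> R \<subseteq> {..<length G} \<Longrightarrow> R \<noteq> {} \<Longrightarrow> card R + a \<le> card (nbhd G R)"
  unfolding expanding_def by blast

lemma expanding_finite_nbhd:
  assumes "expanding G a" "R \<subseteq> {..<length G}"
  shows "finite (nbhd G R)"
proof (cases "R = {}")
  case False
  then have "card R + a \<le> card (nbhd G R)" using assms by (intro expandingD)
  moreover have "card R > 0" using False assms(2) by (simp add: card_gt_0_iff finite_subset)
  ultimately have "card (nbhd G R) > 0" by linarith
  then show ?thesis by (simp add: card_gt_0_iff)
qed (simp add: nbhd_def)

lemma nbhd_mono: "U \<subseteq> V \<Longrightarrow> nbhd G U \<subseteq> nbhd G V"
  unfolding nbhd_def by auto

lemma deficiency_increases_by_tight_rows: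
  assumes exp: "expanding G a"
    and R: "R \<subseteq> {..<length G}" "card (nbhd G R) = card R + a"
    and S: "S \<subseteq> nbhd G R" "w \<in> S" "a < card S" "S \<inter> B = {}"
    and U: "U \<subseteq> {..<length G}" "w \<notin> nbhd G U"
    and "finite B"
  shows "card (nbhd G (U \<union> R) \<inter> B) + card U < card (nbhd G U \<inter> B) + card (U \<union> R)"
proof -
  define X where "X = S \<union> nbhd G (R \<inter> U)"
  have fin_R: "finite (nbhd G R)" using expanding_finite_nbhd[OF exp R(1)] .
  have X_R: "X \<subseteq> nbhd G R" using S(1) nbhd_mono[of "R \<inter> U" R G] by (auto simp: X_def)
  then have fin_X: "finite X" using fin_R finite_subset by blast
  have card_X: "card (R \<inter> U) + a < card X"
  proof (cases "R \<inter> U = {}")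
    case True
    then show ?thesis using S(3) card_mono[OF fin_X] by (auto simp: X_def nbhd_def)
  next
    case False
    then have "card (R \<inter> U) + a \<le> card (nbhd G (R \<inter> U))"
      using exp R(1) by (intro expandingD) auto
    moreover have "w \<notin> nbhd G (R \<inter> U)" using U(2) nbhd_mono[of "R \<inter> U" U G] by blast
    then have "nbhd G (R \<inter> U) \<subset> X" unfolding X_def using S(2) by blast
    then have "card (nbhd G (R \<inter> U)) < card X" by (rule psubset_card_mono[OF fin_X])
    ultimately show ?thesis by linarith
  qed
  have "card (nbhd G R - X) + card X = card (nbhd G R)"
    using X_R fin_X card_mono[OF fin_R X_R] by (simp add: card_Diff_subset)
  moreover have "card R = card (R \<inter> U) + card (R - U)"
    using R(1) by (simp add: card_Int_Diff finite_subset)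
  ultimately have card_rest: "card (nbhd G R - X) < card (R - U)" using R(2) card_X by linarith
  have "nbhd G (U \<union> R) \<inter> B \<subseteq> (nbhd G U \<inter> B) \<union> (nbhd G R - X)"
    using S(4) unfolding X_def nbhd_def by auto
  then have "card (nbhd G (U \<union> R) \<inter> B) \<le> card (nbhd G U \<inter> B) + card (nbhd G R - X)"
    using \<open>finite B\<close> fin_R by (intro order_trans[OF card_mono card_Un_le]) auto
  moreover have "card (U \<union> R) = card U + card (R - U)"
    using U(1) R(1) card_Un_disjoint[of U "R - U"] by (simp add: finite_subset)
  ultimately show ?thesis using card_rest by linarith
qed

lemma mcm_insert_eq_Suc_if_tight:
  assumes exp: "expanding G a"
    and R: "R \<subseteq> {..<length G}" "card (nbhd G R) = card R + a"
    and S: "S \<subseteq> nbhd G R" "w \<in> S" "a < card S" "S \<inter> B = {}"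
    and "finite B"
  shows "mcm G (insert w B) = Suc (mcm G B)"
proof -
  obtain U where U: "U \<subseteq> {..<length G}"
    "length G + card (nbhd G U \<inter> insert w B) \<le> mcm G (insert w B) + card U"
    using ex_deficient_rows[of "insert w B" G] \<open>finite B\<close> by auto
  have "w \<notin> B" using S(2,4) by blast
  have "mcm G B < mcm G (insert w B)"
  proof (cases "w \<in> nbhd G U")
    case True
    then have "card (nbhd G U \<inter> insert w B) = Suc (card (nbhd G U \<inter> B))"
      using \<open>w \<notin> B\<close> \<open>finite B\<close> by (simp add: Int_insert_right)
    then show ?thesis using U mcm_add_card_le[OF \<open>finite B\<close> U(1)] by linarith
  next
    case False
    then have "nbhd G U \<inter> insert w B = nbhd G U \<inter> B" by blast
    then have "length G + card (nbhd G U \<inter> B) \<le> mcm G (insert w B) + card U" using U(2) by simp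
    moreover have "U \<union> R \<subseteq> {..<length G}" using U(1) R(1) by blast
    then have "mcm G B + card (U \<union> R) \<le> length G + card (nbhd G (U \<union> R) \<inter> B)"
      by (rule mcm_add_card_le[OF \<open>finite B\<close>])
    moreover note deficiency_increases_by_tight_rows[OF exp R S U(1) False \<open>finite B\<close>]
    ultimately show ?thesis by linarith
  qed
  with mcm_insert_le[OF \<open>finite B\<close>, of G w] show ?thesis by linarith
qed

lemma nbhd_append:
  assumes "R \<subseteq> {..<length G}"
  shows "nbhd (G @ [S]) R = nbhd G R" "nbhd (G @ [S]) (insert (length G) R) = nbhd G R \<union> S"
  using assms by (auto simp: nbhd_def nth_append subset_iff)

lemma expanding_append:
  assumes exp: "expanding G a" and "finite S" "a < card S"
    and not_covered: "\<forall>R\<subseteq>{..<length G}. card (nbhd G R) = card R + a \<longrightarrow> \<not> S \<subseteq> nbhd G R"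
  shows "expanding (G @ [S]) a"
  unfolding expanding_def
proof (intro allI impI)
  fix R' assume R': "R' \<subseteq> {..<length (G @ [S])}" "R' \<noteq> {}"
  define R where "R = R' - {length G}"
  have R: "R \<subseteq> {..<length G}" using R'(1) by (auto simp: R_def)
  show "card R' + a \<le> card (nbhd (G @ [S]) R')"
  proof (cases "length G \<in> R'")
    case False
    then have "R' \<subseteq> {..<length G}" using R'(1) by (auto simp: less_Suc_eq)
    then show ?thesis using expandingD[OF exp _ R'(2)] nbhd_append(1) by simp
  next
    case True
    then have R'_eq: "R' = insert (length G) R" by (auto simp: R_def)
    have fin_R: "finite (nbhd G R)" by (rule expanding_finite_nbhd[OF exp R])
    have "card R + a < card (nbhd G R \<union> S)"
    proof (cases "R = {}")
      case True
      then show ?thesis using \<open>a < card S\<close> by (simp add: nbhd_def)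
    next
      case False
      then have surplus: "card R + a \<le> card (nbhd G R)" by (rule expandingD[OF exp R])
      show ?thesis
      proof (cases "S \<subseteq> nbhd G R")
        case True
        then have "card R + a \<noteq> card (nbhd G R)" using not_covered R by auto
        then show ?thesis using surplus True by (simp add: Un_absorb2)
      next
        case False
        then have "nbhd G R \<subset> nbhd G R \<union> S" by blast
        then have "card (nbhd G R) < card (nbhd G R \<union> S)"
          using fin_R \<open>finite S\<close> by (intro psubset_card_mono) auto
        then show ?thesis using surplus by linarith
      qed
    qed
    moreover have "length G \<notin> R" "finite R"
      using finite_subset[OF R finite_lessThan] by (auto simp: R_def)
    then have "card R' = Suc (card R)" by (simp add: R'_eq)
    ultimately show ?thesis using nbhd_append(2)[OF R] R'_eq by simp
  qed
qed

lemma length_add_le_card_if_expanding: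
  assumes "expanding G a" "G \<noteq> []" "\<Union>(set G) \<subseteq> V" "finite V"
  shows "length G + a \<le> card V"
proof -
  have "nbhd G {..<length G} \<subseteq> V"
    using assms(3) nth_mem by (fastforce simp: nbhd_def)
  then have "card (nbhd G {..<length G}) \<le> card V" using assms(4) by (rule card_mono[rotated])
  moreover have "length G + a \<le> card (nbhd G {..<length G})"
    using expandingD[OF assms(1), of "{..<length G}"] assms(2) by (simp add: lessThan_empty_iff)
  ultimately show ?thesis by linarith
qed

lemma umcd_exec_add_le:
  assumes "umcd_exec m A N G k"
    and "index_coding_instance m A" "N \<subseteq> {1..m}" "\<forall>i\<in>N. a \<le> card (A i)" "a \<le> m"
    and "\<Union>(set G) \<subseteq> {1..m}" "expanding G a"
    and "\<forall>i\<in>N. mcm G (insert i (interf m A i)) \<noteq> mcm G (interf m A i) + 1"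
  shows "k + a \<le> m"
  using assms
proof (induction rule: umcd_exec.induct)
  case (stop G)
  then show ?case
    using length_add_le_card_if_expanding[of G a "{1..m}"] by (cases "G = []") auto
next
  case (step N w G' G N' k)
  define S where "S = insert w (A w)"
  have "w \<in> {1..m}" using step.hyps(2) step.prems(2) by blast
  then have "A w \<subseteq> {1..m} - {w}" using step.prems(1) by (simp add: index_coding_instance_def)
  then have "finite (A w)" by (rule finite_subset) simp
  moreover have "w \<notin> A w" "S \<subseteq> {1..m}" "interf m A w = {1..m} - S"
    using \<open>A w \<subseteq> _\<close> \<open>w \<in> {1..m}\<close> by (auto simp: S_def interf_def)
  moreover have "a \<le> card (A w)" using step.hyps(2) step.prems(3) by blast
  ultimately have S: "S \<subseteq> {1..m}" "a < card S" "interf m A w = {1..m} - S"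
    by (simp_all add: S_def)
  have "\<not> S \<subseteq> nbhd G R" if "R \<subseteq> {..<length G}" "card (nbhd G R) = card R + a" for R
  proof
    assume "S \<subseteq> nbhd G R"
    then have "mcm G (insert w (interf m A w)) = Suc (mcm G (interf m A w))"
      using S by (intro mcm_insert_eq_Suc_if_tight[OF step.prems(6) that]) (auto simp: S_def)
    then show False using step.prems(7) step.hyps(2) by simp
  qed
  then have "expanding G' a"
    using step.hyps(4) S expanding_append[OF step.prems(6)] finite_subset[OF S(1)]
    by (simp add: S_def)
  moreover have "\<Union>(set G') \<subseteq> {1..m}" using step.hyps(4) step.prems(5) S(1) by (simp add: S_def)
  ultimately show ?case
    using step.prems(1-4) unfolding step.hyps(5) by (intro step.IH[unfolded step.hyps(5)]) auto
qed

theorem theorem3: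
  fixes m :: nat and A :: "nat \<Rightarrow> nat set" and k :: nat
  assumes "index_coding_instance m A"
    and "umcd_output m A k"
  shows "k \<le> m - A_min m A"
proof -
  have m: "1 \<in> {1..m}" using assms(1) by (simp add: index_coding_instance_def)
  have A_min_le: "A_min m A \<le> card (A i)" if "i \<in> {1..m}" for i
    unfolding A_min_def using that by (intro Min_le) auto
  have "A 1 \<subseteq> {1..m}" using assms(1) m unfolding index_coding_instance_def by blast
  then have "card (A 1) \<le> m" using card_mono[of "{1..m}" "A 1"] by simp
  then have "k + A_min m A \<le> m"
    using assms(2) A_min_le[OF m]
    by (intro umcd_exec_add_le[where N = "{1..m}" and G = "[]"])
      (auto simp: umcd_output_def assms(1) A_min_le expanding_def mcm_Nil)
  then show ?thesis by simp
qed

end
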